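(* There is a constant $C$ depending only on $D$ such that for every $w,z\in\mathbb{S}^D_+$ and every $\pi\in\Pi(z+w)$ there exists $\pi'\in\Pi(z)$ with $\displaystyle\int_0^1|\pi(s)-\pi'(s)|\,ds\le C\,K(z,|w|).$
   Context: $\mathbb{S}^D$ is the space of real symmetric $D\times D$ matrices with entrywise inner product $a\cdot b=\sum_{i,j}a_{ij}b_{ij}$ and norm $|a|=\sqrt{a\cdot a}$; $\mathbb{S}^D_+$ is the set of positive semidefinite ones; $a\succeq b$ means $a\cdot c\ge b\cdot c$ for all $c\in\mathbb{S}^D_+$. $\Pi$ is the set of left-continuous maps $\pi:[0,1]\to\mathbb{S}^D_+$ with $\pi(s')\succeq\pi(s)$ for $s'\ge s$, and $\Pi(z)=\{\pi\in\Pi:\pi(1)=z\}$. For $z\in\mathbb{S}^D_+\setminus\{0\}$, $m(z)$ denotes the smallest positive eigenvalue of $z$. For $z\in\mathbb{S}^D_+$ and $r\ge0$, $K(z,r)=(|z|+r)\big(1+|z|^{1/2}m(z)^{-1/2}\big)m(z)^{-1/2}r^{1/2}+\sqrt{(|z|+r)r}$ if $z\neq0$, and $K(0,r)=r$. *)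

theory Defs
  imports "HOL-Analysis.Analysis"
begin

text \<open>Real D x D matrices are represented as real^'n^'n, with D = CARD('n).\<close>

definition sym_mat :: "real^'n^'n \<Rightarrow> bool" where
  "sym_mat a \<longleftrightarrow> transpose a = a"

definition frob_inner :: "real^'n^'n \<Rightarrow> real^'n^'n \<Rightarrow> real" where
  "frob_inner a b = (\<Sum>i\<in>UNIV. \<Sum>j\<in>UNIV. a$i$j * b$i$j)"

definition frob_norm :: "real^'n^'n \<Rightarrow> real" where
  "frob_norm a = sqrt (frob_inner a a)"

definition psd :: "real^'n^'n \<Rightarrow> bool" where
  "psd a \<longleftrightarrow> sym_mat a \<and> (\<forall>x. 0 \<le> x \<bullet> (a *v x))"

definition psd_ge :: "real^'n^'n \<Rightarrow> real^'n^'n \<Rightarrow> bool" where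
  "psd_ge a b \<longleftrightarrow> (\<forall>c. psd c \<longrightarrow> frob_inner b c \<le> frob_inner a c)"

definition paths :: "(real \<Rightarrow> real^'n^'n) set" where
  "paths = {\<pi>. (\<forall>s\<in>{0..1}. psd (\<pi> s))
      \<and> (\<forall>s\<in>{0<..1}. (\<pi> \<longlongrightarrow> \<pi> s) (at s within {0..<s}))
      \<and> (\<forall>s s'. 0 \<le> s \<and> s \<le> s' \<and> s' \<le> 1 \<longrightarrow> psd_ge (\<pi> s') (\<pi> s))}"

definition paths_to :: "real^'n^'n \<Rightarrow> (real \<Rightarrow> real^'n^'n) set" where
  "paths_to z = {\<pi>\<in>paths. \<pi> 1 = z}"

definition is_eigenvalue :: "real^'n^'n \<Rightarrow> real \<Rightarrow> bool" where
  "is_eigenvalue a l \<longleftrightarrow> (\<exists>x. x \<noteq> 0 \<and> a *v x = l *\<^sub>R x)"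

definition min_pos_eig :: "real^'n^'n \<Rightarrow> real" where
  "min_pos_eig z = Inf {l. 0 < l \<and> is_eigenvalue z l}"

definition Kfun :: "real^'n^'n \<Rightarrow> real \<Rightarrow> real" where
  "Kfun z r = (if z = 0 then r else
     (frob_norm z + r) * (1 + sqrt (frob_norm z) / sqrt (min_pos_eig z))
        * sqrt r / sqrt (min_pos_eig z)
     + sqrt ((frob_norm z + r) * r))"

end

theory Submission
  imports Defs
begin

(* Let P be the orthogonal projection onto the range of z, m = m(z), r = |w| and t = m/(m+r).
   The linear map
     F X = t P X P + (tr X / tr (z+w)) R,   R = z - t P (z+w) P,
   sends S^D_+ into itself and z + w to z: R is positive semidefinite because
   t P w P <= t r P = (1-t) m P <= (1-t) z.  Hence pi' = F o pi lies in Pi(z).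
   For 0 <= X <= z + w write v = p + q with p = P v and z q = 0.  The quadratic form of X - F X
   at v is (1-t) pXp + 2 pXq + qXq - (tr X / tr (z+w)) vRv, and every term is bounded by a
   multiple of K(z,r) |v|^2: qXq <= q w q <= r |v|^2, pXq is controlled by Cauchy-Schwarz,
   and 1 - t = r/(m+r) <= sqrt (r/m).  A bound on the quadratic form of a symmetric matrix
   bounds its norm, which gives the pointwise and hence the integral estimate. *)

lemma frob_inner_eq_inner: "frob_inner a b = a \<bullet> b"
  by (simp add: frob_inner_def inner_vec_def)

lemma frob_norm_eq_norm: "frob_norm a = norm a"
  by (simp add: frob_norm_def frob_inner_eq_inner norm_eq_sqrt_inner)

lemma nonneg_quadratic_discriminant:
  fixes a b c :: real
  assumes nonneg: "\<And>t. 0 \<le> c + 2 * t * b + t\<^sup>2 * a" and "0 \<le> a"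
  shows "b\<^sup>2 \<le> a * c"
proof (cases "a = 0")
  case True
  have "b = 0"
  proof (rule ccontr)
    assume "b \<noteq> 0"
    then show False
      using nonneg[of "- (c + 1) / (2 * b)"] True by (simp add: field_simps)
  qed
  then show ?thesis using True by simp
next
  case False
  then have "0 < a" using \<open>0 \<le> a\<close> by simp
  have "0 \<le> c + 2 * (- b / a) * b + (- b / a)\<^sup>2 * a" by (rule nonneg)
  also have "\<dots> = (a * c - b\<^sup>2) / a"
    using \<open>0 < a\<close> by (simp add: field_simps power2_eq_square)
  finally show ?thesis using \<open>0 < a\<close> by (simp add: zero_le_divide_iff)
qed

lemma sym_mat_add: "sym_mat a \<Longrightarrow> sym_mat b \<Longrightarrow> sym_mat (a + b)"
  by (simp add: sym_mat_def transpose_def vec_eq_iff)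

lemma sym_mat_diff: "sym_mat a \<Longrightarrow> sym_mat b \<Longrightarrow> sym_mat (a - b)"
  by (simp add: sym_mat_def transpose_def vec_eq_iff)

lemma sym_mat_scaleR: "sym_mat a \<Longrightarrow> sym_mat (k *\<^sub>R a)"
  by (simp add: sym_mat_def transpose_def vec_eq_iff)

lemma sym_mat_inner_commute:
  assumes "sym_mat a"
  shows "x \<bullet> (a *v y) = y \<bullet> (a *v x)"
proof -
  have "x \<bullet> (a *v y) = (x v* a) \<bullet> y"
    by (simp add: dot_lmul_matrix)
  also have "x v* a = a *v x"
    using assms by (metis sym_mat_def transpose_matrix_vector)
  finally show ?thesis by (simp add: inner_commute)
qed

lemma sym_mat_quadratic_form_add:
  assumes "sym_mat a"
  shows "(x + t *\<^sub>R y) \<bullet> (a *v (x + t *\<^sub>R y))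
    = x \<bullet> (a *v x) + 2 * t * (x \<bullet> (a *v y)) + t\<^sup>2 * (y \<bullet> (a *v y))"
  using sym_mat_inner_commute[OF assms, of x y]
  by (simp add: matrix_vector_right_distrib matrix_vector_mult_scaleR inner_add_left
      inner_add_right algebra_simps power2_eq_square)

lemma sym_mat_entry_polarization:
  assumes "sym_mat a"
  shows "a $ i $ j = ((axis i 1 + axis j 1) \<bullet> (a *v (axis i 1 + axis j 1))
    - axis i 1 \<bullet> (a *v axis i 1) - axis j 1 \<bullet> (a *v axis j 1)) / 2"
proof -
  have entry: "axis k 1 \<bullet> (a *v axis l 1) = a $ k $ l" for k l
    by (simp add: inner_axis' matrix_vector_mult_basis column_def)
  have "a $ j $ i = a $ i $ j"
    using assms unfolding sym_mat_def by (metis transpose_def vec_lambda_beta)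
  then show ?thesis
    using sym_mat_quadratic_form_add[OF assms, of "axis i 1" 1 "axis j 1"] by (simp add: entry)
qed

lemma psd_imp_sym_mat: "psd a \<Longrightarrow> sym_mat a"
  by (simp add: psd_def)

lemma psd_quadratic_form_nonneg: "psd a \<Longrightarrow> 0 \<le> x \<bullet> (a *v x)"
  by (simp add: psd_def)

lemma psd_Cauchy_Schwarz:
  assumes "psd a"
  shows "(x \<bullet> (a *v y))\<^sup>2 \<le> (y \<bullet> (a *v y)) * (x \<bullet> (a *v x))"
proof (rule nonneg_quadratic_discriminant)
  fix t
  show "0 \<le> x \<bullet> (a *v x) + 2 * t * (x \<bullet> (a *v y)) + t\<^sup>2 * (y \<bullet> (a *v y))"
    using psd_quadratic_form_nonneg[OF assms, of "x + t *\<^sub>R y"]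
    by (simp add: sym_mat_quadratic_form_add[OF psd_imp_sym_mat[OF assms]])
qed (rule psd_quadratic_form_nonneg[OF assms])

lemma psd_quadratic_form_eq_0_imp:
  assumes "psd a" "x \<bullet> (a *v x) = 0"
  shows "a *v x = 0"
proof -
  have "(x \<bullet> (a *v (a *v x)))\<^sup>2 \<le> 0"
    using psd_Cauchy_Schwarz[OF assms(1), of x "a *v x"] assms(2) by simp
  moreover have "x \<bullet> (a *v (a *v x)) = (a *v x) \<bullet> (a *v x)"
    by (rule sym_mat_inner_commute[OF psd_imp_sym_mat[OF assms(1)]])
  ultimately show ?thesis by simp
qed

lemma psd_zero: "psd 0"
  by (simp add: psd_def sym_mat_def transpose_def vec_eq_iff)

lemma psd_add: "psd a \<Longrightarrow> psd b \<Longrightarrow> psd (a + b)"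
  by (simp add: psd_def sym_mat_add matrix_vector_mult_add_rdistrib inner_add_right)

lemma psd_scaleR: "psd a \<Longrightarrow> 0 \<le> k \<Longrightarrow> psd (k *\<^sub>R a)"
  by (simp add: psd_def sym_mat_scaleR scaleR_matrix_vector_assoc[symmetric])

definition outer_prod :: "real^'n \<Rightarrow> real^'n \<Rightarrow> real^'n^'n" where
  "outer_prod v w = (\<chi> i j. v $ i * w $ j)"

lemma outer_prod_mult: "outer_prod v w *v x = (w \<bullet> x) *\<^sub>R v"
  by (simp add: outer_prod_def matrix_vector_mult_def inner_vec_def vec_eq_iff
      sum_distrib_left algebra_simps)

lemma inner_outer_prod: "a \<bullet> outer_prod v w = v \<bullet> (a *v w)"
  by (simp add: outer_prod_def matrix_vector_mult_def inner_vec_def sum_distrib_left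
      algebra_simps)

lemma psd_outer_prod: "psd (outer_prod v v)"
  unfolding psd_def outer_prod_mult
  by (auto simp: sym_mat_def transpose_def outer_prod_def vec_eq_iff mult.commute inner_commute)

definition congruence :: "real^'n^'n \<Rightarrow> real^'n^'n \<Rightarrow> real^'n^'n" where
  "congruence P X = transpose P ** X ** P"

lemma matrix_add_rdistrib: "((A::real^'n^'m) + B) ** C = A ** C + B ** C"
  by (simp add: matrix_matrix_mult_def vec_eq_iff sum.distrib algebra_simps)

lemma congruence_add: "congruence P (X + Y) = congruence P X + congruence P Y"
  by (simp add: congruence_def matrix_add_ldistrib matrix_add_rdistrib)

lemma congruence_scaleR: "congruence P (k *\<^sub>R X) = k *\<^sub>R congruence P X"
  by (simp add: congruence_def matrix_scalar_ac scalar_matrix_assoc)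

lemma congruence_quadratic_form:
  "x \<bullet> (congruence P X *v y) = (P *v x) \<bullet> (X *v (P *v y))"
proof -
  have "congruence P X *v y = transpose P *v (X *v (P *v y))"
    by (simp add: congruence_def matrix_vector_mul_assoc matrix_mul_assoc)
  then show ?thesis
    by (metis dot_lmul_matrix inner_commute transpose_matrix_vector)
qed

lemma sym_mat_congruence: "sym_mat X \<Longrightarrow> sym_mat (congruence P X)"
  by (simp add: sym_mat_def congruence_def matrix_transpose_mul matrix_mul_assoc)

lemma psd_congruence: "psd X \<Longrightarrow> psd (congruence P X)"
  by (simp add: psd_def sym_mat_congruence congruence_quadratic_form)

lemma subspace_range_matrix_vector_mult: "subspace (range ((*v) (A::real^'n^'m)))"
  by (simp add: linear_subspace_image)

definition deflate :: "real^'n^'n \<Rightarrow> real^'n \<Rightarrow> real^'n^'n" where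
  "deflate c u = c - (1 / (u \<bullet> (c *v u))) *\<^sub>R outer_prod (c *v u) (c *v u)"

lemma deflate_mult:
  assumes "sym_mat c"
  shows "deflate c u *v x = c *v x - ((u \<bullet> (c *v x)) / (u \<bullet> (c *v u))) *\<^sub>R (c *v u)"
  using sym_mat_inner_commute[OF assms, of u x]
  by (simp add: deflate_def matrix_vector_mult_diff_rdistrib outer_prod_mult inner_commute
      flip: scaleR_matrix_vector_assoc)

lemma psd_deflate:
  assumes c: "psd c" and pos: "0 < u \<bullet> (c *v u)"
  shows "psd (deflate c u)"
proof -
  have symc: "sym_mat c" using c by (rule psd_imp_sym_mat)
  have "sym_mat (deflate c u)"
    unfolding deflate_def using psd_outer_prod psd_imp_sym_mat
    by (intro sym_mat_diff symc sym_mat_scaleR) blast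
  moreover have "0 \<le> x \<bullet> (deflate c u *v x)" for x
  proof -
    have "(u \<bullet> (c *v x))\<^sup>2 \<le> (x \<bullet> (c *v x)) * (u \<bullet> (c *v u))"
      using psd_Cauchy_Schwarz[OF c, of u x] .
    then show ?thesis
      using pos sym_mat_inner_commute[OF symc, of x u]
      by (simp add: deflate_mult[OF symc] inner_diff_right field_simps power2_eq_square)
  qed
  ultimately show ?thesis by (simp add: psd_def)
qed

lemma rank_deflate_less:
  assumes c: "psd c" and pos: "0 < u \<bullet> (c *v u)"
  shows "rank (deflate c u) < rank c"
proof -
  have symc: "sym_mat c" using c by (rule psd_imp_sym_mat)
  have "range ((*v) (deflate c u)) \<subseteq> range ((*v) c)"
  proof clarify
    fix x
    have "deflate c u *v x = c *v (x - ((u \<bullet> (c *v x)) / (u \<bullet> (c *v u))) *\<^sub>R u)"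
      by (simp add: deflate_mult[OF symc] matrix_vector_mult_diff_distrib matrix_vector_mult_scaleR)
    then show "deflate c u *v x \<in> range ((*v) c)" by blast
  qed
  moreover have "c *v u \<notin> range ((*v) (deflate c u))"
  proof
    assume "c *v u \<in> range ((*v) (deflate c u))"
    then obtain y where y: "c *v u = deflate c u *v y" by blast
    have "deflate c u *v u = 0" using pos by (simp add: deflate_mult[OF symc])
    then have "u \<bullet> (c *v u) = 0"
      using sym_mat_inner_commute[OF psd_imp_sym_mat[OF psd_deflate[OF c pos]], of u y] y by simp
    then show False using pos by simp
  qed
  ultimately have "range ((*v) (deflate c u)) \<subset> range ((*v) c)" by blast
  then show ?thesis
    unfolding rank_dim_range
    by (intro dim_psubset) (simp add: subspace_range_matrix_vector_mult span_eq_iff[THEN iffD2])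
qed

lemma psd_inner_nonneg:
  assumes "psd a" "psd c"
  shows "0 \<le> a \<bullet> c"
  using assms(2)
proof (induction "rank c" arbitrary: c rule: less_induct)
  case less
  show ?case
  proof (cases "\<forall>u. u \<bullet> (c *v u) = 0")
    case True
    then have "c = 0"
      using psd_quadratic_form_eq_0_imp[OF less.prems] by (simp add: matrix_eq)
    then show ?thesis by simp
  next
    case False
    then obtain u where pos: "0 < u \<bullet> (c *v u)"
      using psd_quadratic_form_nonneg[OF less.prems] by (metis order_le_less)
    have "0 \<le> a \<bullet> deflate c u"
      using psd_deflate[OF less.prems pos] rank_deflate_less[OF less.prems pos] less.hyps by blast
    moreover have "0 \<le> (c *v u) \<bullet> (a *v (c *v u)) / (u \<bullet> (c *v u))"
      using psd_quadratic_form_nonneg[OF assms(1)] pos by simp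
    ultimately show ?thesis
      by (simp add: deflate_def inner_diff_right inner_outer_prod)
  qed
qed

lemma psd_ge_iff_psd_diff:
  assumes "sym_mat a" "sym_mat b"
  shows "psd_ge a b \<longleftrightarrow> psd (a - b)"
proof
  assume "psd_ge a b"
  then have "v \<bullet> (b *v v) \<le> v \<bullet> (a *v v)" for v
    using psd_outer_prod[of v] by (auto simp: psd_ge_def frob_inner_eq_inner inner_outer_prod)
  then show "psd (a - b)"
    using assms by (simp add: psd_def sym_mat_diff matrix_vector_mult_diff_rdistrib inner_diff_right)
next
  assume "psd (a - b)"
  then show "psd_ge a b"
    using psd_inner_nonneg[of "a - b"] by (auto simp: psd_ge_def frob_inner_eq_inner inner_diff_left)
qed

lemma psd_quadratic_form_mono: "psd (b - a) \<Longrightarrow> v \<bullet> (a *v v) \<le> v \<bullet> (b *v v)"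
  using psd_quadratic_form_nonneg[of "b - a" v]
  by (simp add: matrix_vector_mult_diff_rdistrib inner_diff_right)

lemma trace_eq_sum_quadratic_forms:
  "trace (X::real^'n^'n) = (\<Sum>i\<in>UNIV. axis i 1 \<bullet> (X *v axis i 1))"
  by (simp add: trace_def inner_axis' matrix_vector_mult_basis column_def)

lemma trace_scaleR: "trace (c *\<^sub>R (X::real^'n^'n)) = c * trace X"
  by (simp add: trace_def sum_distrib_left)

lemma trace_nonneg: "psd X \<Longrightarrow> 0 \<le> trace X"
  by (simp add: trace_eq_sum_quadratic_forms sum_nonneg psd_quadratic_form_nonneg)

lemma trace_pos:
  assumes "psd X" "X \<noteq> 0"
  shows "0 < trace X"
proof (rule ccontr)
  assume "\<not> 0 < trace X"
  then have "(\<Sum>i\<in>UNIV. axis i 1 \<bullet> (X *v axis i 1)) = 0"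
    using trace_nonneg[OF assms(1)] by (simp add: trace_eq_sum_quadratic_forms)
  then have "\<forall>i. axis i 1 \<bullet> (X *v axis i 1) = 0"
    using psd_quadratic_form_nonneg[OF assms(1)] by (simp add: sum_nonneg_eq_0_iff)
  then have "\<forall>i. X *v axis i 1 = 0"
    using psd_quadratic_form_eq_0_imp[OF assms(1)] by blast
  then have "X = 0"
    by (simp add: matrix_vector_mult_basis column_def vec_eq_iff)
  with assms(2) show False ..
qed

lemma norm_matrix_vector_mult_le: "norm (A *v x) \<le> norm (A::real^'n^'m) * norm x"
proof -
  have "(norm (A *v x))\<^sup>2 = (\<Sum>i\<in>UNIV. (A $ i \<bullet> x)\<^sup>2)"
    by (simp only: power2_norm_eq_inner)
      (simp add: inner_vec_def matrix_vector_mult_def power2_eq_square)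
  also have "\<dots> \<le> (\<Sum>i\<in>UNIV. (A $ i \<bullet> A $ i) * (x \<bullet> x))"
    by (intro sum_mono Cauchy_Schwarz_ineq)
  also have "\<dots> = (norm A * norm x)\<^sup>2"
    by (simp add: power_mult_distrib power2_norm_eq_inner inner_vec_def[of A A] sum_distrib_right)
  finally show ?thesis by (rule power2_le_imp_le) simp
qed

lemma abs_quadratic_form_le: "\<bar>x \<bullet> (A *v x)\<bar> \<le> norm (A::real^'n^'n) * (norm x)\<^sup>2"
proof -
  have "\<bar>x \<bullet> (A *v x)\<bar> \<le> norm x * norm (A *v x)" by (rule Cauchy_Schwarz_ineq2)
  also have "\<dots> \<le> norm x * (norm A * norm x)"
    by (intro mult_left_mono norm_matrix_vector_mult_le) simp
  finally show ?thesis by (simp add: power2_eq_square algebra_simps)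
qed

lemma norm_le_of_quadratic_form_bound:
  fixes D :: "real^'n^'n"
  assumes "sym_mat D" and bound: "\<And>v. \<bar>v \<bullet> (D *v v)\<bar> \<le> M * (norm v)\<^sup>2"
  shows "norm D \<le> 3 * M * (real CARD('n))\<^sup>2"
proof -
  have entry: "\<bar>D $ i $ j\<bar> \<le> 3 * M" for i j
  proof -
    have "(norm (axis i (1::real) + axis j 1))\<^sup>2 \<le> 2\<^sup>2"
      using norm_triangle_ineq[of "axis i (1::real)" "axis j 1"]
      by (intro power_mono) (auto simp: norm_axis_1)
    then have "M * (norm (axis i (1::real) + axis j 1))\<^sup>2 \<le> M * 4"
      using bound[of "axis i 1"] by (intro mult_left_mono) (auto simp: norm_axis_1)
    then show ?thesis
      using sym_mat_entry_polarization[OF assms(1), of i j]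
        bound[of "axis i 1 + axis j 1"] bound[of "axis i 1"] bound[of "axis j 1"]
      by (simp add: norm_axis_1)
  qed
  have "norm D \<le> (\<Sum>i\<in>UNIV. norm (D $ i))"
    unfolding norm_vec_def by (rule L2_set_le_sum) simp
  also have "\<dots> \<le> (\<Sum>i\<in>UNIV. \<Sum>j\<in>UNIV. \<bar>D $ i $ j\<bar>)"
    by (intro sum_mono norm_le_l1_cart)
  also have "\<dots> \<le> (\<Sum>i\<in>(UNIV::'n set). \<Sum>j\<in>(UNIV::'n set). 3 * M)"
    by (intro sum_mono entry)
  also have "\<dots> = 3 * M * (real CARD('n))\<^sup>2"
    by (simp add: power2_eq_square)
  finally show ?thesis .
qed

lemma psd_between_quadratic_form_bound:
  assumes "psd X" "psd (Y - X)"
  shows "0 \<le> v \<bullet> (X *v v)" and "v \<bullet> (X *v v) \<le> v \<bullet> (Y *v v)"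
    and "\<bar>v \<bullet> (X *v v)\<bar> \<le> norm Y * (norm v)\<^sup>2"
proof -
  show "0 \<le> v \<bullet> (X *v v)" "v \<bullet> (X *v v) \<le> v \<bullet> (Y *v v)"
    using assms by (simp_all add: psd_quadratic_form_nonneg psd_quadratic_form_mono)
  then show "\<bar>v \<bullet> (X *v v)\<bar> \<le> norm Y * (norm v)\<^sup>2"
    using abs_quadratic_form_le[of v Y] by linarith
qed

lemma psd_between_cross_term_bound:
  assumes "psd X" "psd (Y - X)"
  shows "\<bar>a \<bullet> (X *v b)\<bar> \<le> sqrt ((a \<bullet> (Y *v a)) * (b \<bullet> (Y *v b)))"
proof (rule real_le_rsqrt)
  have "\<bar>a \<bullet> (X *v b)\<bar>\<^sup>2 \<le> (a \<bullet> (X *v a)) * (b \<bullet> (X *v b))"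
    using psd_Cauchy_Schwarz[OF assms(1), of a b] by (simp add: mult.commute)
  also have "\<dots> \<le> (a \<bullet> (Y *v a)) * (b \<bullet> (Y *v b))"
    using psd_between_quadratic_form_bound(1,2)[OF assms] by (intro mult_mono) (auto intro: order_trans)
  finally show "\<bar>a \<bullet> (X *v b)\<bar>\<^sup>2 \<le> (a \<bullet> (Y *v a)) * (b \<bullet> (Y *v b))" .
qed

lemma sum_matrix_vector_mult:
  "finite B \<Longrightarrow> (\<Sum>b\<in>B. f b) *v v = (\<Sum>b\<in>B. f b *v v)"
  by (induction rule: finite_induct) (simp_all add: matrix_vector_mult_add_rdistrib)

lemma range_projection_exists:
  fixes z :: "real^'n^'n"
  assumes "sym_mat z"
  obtains P where "\<And>v. P *v v \<in> range ((*v) z)" "\<And>v. z *v (v - P *v v) = 0"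
proof -
  obtain B where B: "pairwise orthogonal B" "span B = range ((*v) z)"
    using orthogonal_basis_subspace[OF subspace_range_matrix_vector_mult] by metis
  have "finite B" using B(1) by (rule pairwise_orthogonal_imp_finite)
  define P where "P = (\<Sum>b\<in>B. (1 / (b \<bullet> b)) *\<^sub>R outer_prod b b)"
  have P_mult: "P *v v = (\<Sum>b\<in>B. (b \<bullet> v / (b \<bullet> b)) *\<^sub>R b)" for v
    by (simp add: P_def sum_matrix_vector_mult[OF \<open>finite B\<close>] outer_prod_mult
        flip: scaleR_matrix_vector_assoc)
  show ?thesis
  proof
    show "P *v v \<in> range ((*v) z)" for v
      unfolding P_mult B(2)[symmetric] by (intro span_sum span_scale span_base)
    show "z *v (v - P *v v) = 0" for v
    proof -
      have "orthogonal (z *v y) (v - P *v v)" for y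
        unfolding P_mult using B by (intro Gram_Schmidt_step) auto
      then have "(z *v (v - P *v v)) \<bullet> y = 0" for y
        using sym_mat_inner_commute[OF assms] by (metis orthogonal_def inner_commute)
      from this[of "z *v (v - P *v v)"] show ?thesis by simp
    qed
  qed
qed

lemma Rayleigh_minimizer_on_range:
  fixes z :: "real^'n^'n"
  assumes "z \<noteq> 0"
  obtains x0 where "x0 \<in> range ((*v) z)" "norm x0 = 1"
    "\<And>y. y \<in> range ((*v) z) \<Longrightarrow> (x0 \<bullet> (z *v x0)) * (norm y)\<^sup>2 \<le> y \<bullet> (z *v y)"
proof -
  define V where "V = range ((*v) z)"
  define f where "f x = x \<bullet> (z *v x)" for x
  have "subspace V" by (simp add: V_def subspace_range_matrix_vector_mult)
  obtain y where "z *v y \<noteq> 0" using assms by (metis matrix_eq matrix_vector_mult_0)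
  moreover have "z *v y \<in> V" by (simp add: V_def)
  ultimately have "(1 / norm (z *v y)) *\<^sub>R (z *v y) \<in> V \<inter> sphere 0 1"
    using \<open>subspace V\<close> by (simp add: subspace_scale norm_scaleR)
  then have ne: "V \<inter> sphere 0 1 \<noteq> {}" by blast
  have "compact (V \<inter> sphere 0 1)"
    using closed_subspace[OF \<open>subspace V\<close>] by (intro closed_Int_compact) auto
  moreover have "continuous_on (V \<inter> sphere 0 1) f"
    unfolding f_def by (intro continuous_intros linear_continuous_on) auto
  ultimately obtain x0 where x0: "x0 \<in> V \<inter> sphere 0 1" "\<And>y. y \<in> V \<inter> sphere 0 1 \<Longrightarrow> f x0 \<le> f y"
    using continuous_attains_inf[OF _ ne] by metis
  have "f x0 * (norm y)\<^sup>2 \<le> f y" if "y \<in> V" for y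
  proof (cases "y = 0")
    case True then show ?thesis by (simp add: f_def)
  next
    case False
    have "f x0 \<le> f ((1 / norm y) *\<^sub>R y)"
      using False \<open>y \<in> V\<close> \<open>subspace V\<close> by (intro x0(2)) (simp add: subspace_scale norm_scaleR)
    also have "\<dots> = f y / (norm y)\<^sup>2"
      by (simp add: f_def matrix_vector_mult_scaleR power2_eq_square)
    finally show ?thesis using False by (simp add: le_divide_eq)
  qed
  then show ?thesis
    using x0(1) that[of x0] by (simp add: V_def f_def)
qed

lemma Rayleigh_minimizer_eigenvector:
  fixes z :: "real^'n^'n"
  assumes "sym_mat z" "subspace V" "\<And>y. y \<in> V \<Longrightarrow> z *v y \<in> V"
    and "x0 \<in> V" "norm x0 = 1"
    and min: "\<And>y. y \<in> V \<Longrightarrow> (x0 \<bullet> (z *v x0)) * (norm y)\<^sup>2 \<le> y \<bullet> (z *v y)"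
  shows "z *v x0 = (x0 \<bullet> (z *v x0)) *\<^sub>R x0"
proof -
  define lam where "lam = x0 \<bullet> (z *v x0)"
  have "y \<bullet> (z *v x0 - lam *\<^sub>R x0) = 0" if "y \<in> V" for y
  proof -
    have "(y \<bullet> (z *v x0) - lam * (y \<bullet> x0))\<^sup>2 \<le> (y \<bullet> (z *v y) - lam * (norm y)\<^sup>2) * 0"
    proof (rule nonneg_quadratic_discriminant)
      fix t
      have "x0 + t *\<^sub>R y \<in> V" using assms(2,4) that by (simp add: subspace_add subspace_scale)
      from min[OF this] have "0 \<le> (x0 + t *\<^sub>R y) \<bullet> (z *v (x0 + t *\<^sub>R y)) - lam * (norm (x0 + t *\<^sub>R y))\<^sup>2"
        by (simp add: lam_def)
      also have "(norm (x0 + t *\<^sub>R y))\<^sup>2 = 1 + 2 * t * (y \<bullet> x0) + t\<^sup>2 * (norm y)\<^sup>2"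
        using \<open>norm x0 = 1\<close> unfolding power2_norm_eq_inner norm_eq_1
        by (simp add: inner_add_left inner_add_right inner_commute power2_eq_square algebra_simps)
      finally show "0 \<le> 0 + 2 * t * (y \<bullet> (z *v x0) - lam * (y \<bullet> x0)) + t\<^sup>2 * (y \<bullet> (z *v y) - lam * (norm y)\<^sup>2)"
        using sym_mat_inner_commute[OF assms(1), of x0 y]
        by (simp add: sym_mat_quadratic_form_add[OF assms(1)] lam_def algebra_simps power2_eq_square)
    qed (use min[OF that] in \<open>simp add: lam_def\<close>)
    then show ?thesis by (simp add: inner_diff_right)
  qed
  moreover have "z *v x0 - lam *\<^sub>R x0 \<in> V"
    using assms(2-4) by (simp add: subspace_diff subspace_scale)
  ultimately have "z *v x0 - lam *\<^sub>R x0 = 0" by (metis inner_eq_zero_iff)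
  then show ?thesis by (simp add: lam_def)
qed

lemma min_pos_eig_eqI:
  fixes z :: "real^'n^'n"
  assumes eig: "z *v x0 = lam *\<^sub>R x0" "x0 \<noteq> 0" "0 < lam"
    and min: "\<And>y. y \<in> range ((*v) z) \<Longrightarrow> lam * (norm y)\<^sup>2 \<le> y \<bullet> (z *v y)"
  shows "min_pos_eig z = lam"
  unfolding min_pos_eig_def
proof (rule antisym)
  have "is_eigenvalue z lam"
    unfolding is_eigenvalue_def using eig by blast
  then show "Inf {l. 0 < l \<and> is_eigenvalue z l} \<le> lam"
    using eig(3) by (intro cInf_lower) (auto intro: bdd_belowI[of _ 0])
  show "lam \<le> Inf {l. 0 < l \<and> is_eigenvalue z l}"
  proof (rule cInf_greatest)
    show "{l. 0 < l \<and> is_eigenvalue z l} \<noteq> {}"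
      using \<open>is_eigenvalue z lam\<close> eig(3) by blast
    fix l assume "l \<in> {l. 0 < l \<and> is_eigenvalue z l}"
    then obtain x where l: "0 < l" "x \<noteq> 0" "z *v x = l *\<^sub>R x"
      by (auto simp: is_eigenvalue_def)
    then have "x = z *v ((1 / l) *\<^sub>R x)" by (simp add: matrix_vector_mult_scaleR)
    then have "lam * (norm x)\<^sup>2 \<le> l * (norm x)\<^sup>2"
      using min[of x] l by (simp add: power2_norm_eq_inner)
    then show "lam \<le> l" using l by simp
  qed
qed

lemma min_pos_eig_Rayleigh_bound:
  fixes z :: "real^'n^'n"
  assumes "psd z" "z \<noteq> 0"
  shows "0 < min_pos_eig z"
    and "\<And>p. p \<in> range ((*v) z) \<Longrightarrow> min_pos_eig z * (norm p)\<^sup>2 \<le> p \<bullet> (z *v p)"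
proof -
  have symz: "sym_mat z" using assms(1) by (rule psd_imp_sym_mat)
  obtain x0 where x0: "x0 \<in> range ((*v) z)" "norm x0 = 1"
    and min: "\<And>y. y \<in> range ((*v) z) \<Longrightarrow> (x0 \<bullet> (z *v x0)) * (norm y)\<^sup>2 \<le> y \<bullet> (z *v y)"
    using Rayleigh_minimizer_on_range[OF assms(2)] by metis
  define lam where "lam = x0 \<bullet> (z *v x0)"
  have eig: "z *v x0 = lam *\<^sub>R x0"
    unfolding lam_def using symz subspace_range_matrix_vector_mult x0 min
    by (intro Rayleigh_minimizer_eigenvector) auto
  have "lam \<noteq> 0"
  proof
    assume "lam = 0"
    obtain u where "x0 = z *v u" using x0(1) by blast
    then have "x0 \<bullet> x0 = u \<bullet> (z *v x0)"
      using sym_mat_inner_commute[OF symz] by (simp add: inner_commute)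
    then show False using eig \<open>lam = 0\<close> x0(2) by simp
  qed
  then have "0 < lam"
    using psd_quadratic_form_nonneg[OF assms(1), of x0] by (simp add: lam_def)
  moreover have "min_pos_eig z = lam"
    using eig x0(2) \<open>0 < lam\<close> min by (intro min_pos_eig_eqI) (auto simp: lam_def)
  ultimately show "0 < min_pos_eig z"
    and "\<And>p. p \<in> range ((*v) z) \<Longrightarrow> min_pos_eig z * (norm p)\<^sup>2 \<le> p \<bullet> (z *v p)"
    using min by (simp_all add: lam_def)
qed

lemma paths_iff:
  "\<pi> \<in> paths \<longleftrightarrow> (\<forall>s\<in>{0..1}. psd (\<pi> s))
      \<and> (\<forall>s\<in>{0<..1}. (\<pi> \<longlongrightarrow> \<pi> s) (at s within {0..<s}))
      \<and> (\<forall>s s'. 0 \<le> s \<and> s \<le> s' \<and> s' \<le> 1 \<longrightarrow> psd (\<pi> s' - \<pi> s))"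
  unfolding paths_def by (auto simp: psd_ge_iff_psd_diff psd_imp_sym_mat)

lemma paths_psd: "\<pi> \<in> paths \<Longrightarrow> s \<in> {0..1} \<Longrightarrow> psd (\<pi> s)"
  by (simp add: paths_iff)

lemma paths_psd_diff: "\<pi> \<in> paths \<Longrightarrow> 0 \<le> s \<Longrightarrow> s \<le> s' \<Longrightarrow> s' \<le> 1 \<Longrightarrow> psd (\<pi> s' - \<pi> s)"
  by (simp add: paths_iff)

lemma linear_image_in_paths:
  assumes "\<pi> \<in> paths" "linear F" "\<And>Y. psd Y \<Longrightarrow> psd (F Y)"
  shows "(\<lambda>s. F (\<pi> s)) \<in> paths"
proof -
  have "isCont F X" for X
    using assms(2) by (simp add: linear_continuous_at linear_conv_bounded_linear)
  moreover have "F (\<pi> s') - F (\<pi> s) = F (\<pi> s' - \<pi> s)" for s s'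
    using assms(2) by (simp add: linear_diff)
  ultimately show ?thesis
    using assms(1,3) unfolding paths_iff by (auto intro: isCont_tendsto_compose)
qed

lemma paths_integrable:
  assumes "\<pi> \<in> paths"
  shows "\<pi> integrable_on {0..1}"
proof (rule integrable_componentwise)
  have quadratic_form: "(\<lambda>s. v \<bullet> (\<pi> s *v v)) integrable_on {0..1}" for v
  proof (rule integrable_on_mono_on, rule mono_onI)
    fix r s :: real assume "r \<in> {0..1}" "s \<in> {0..1}" "r \<le> s"
    then show "v \<bullet> (\<pi> r *v v) \<le> v \<bullet> (\<pi> s *v v)"
      by (intro psd_quadratic_form_mono paths_psd_diff[OF assms]) auto
  qed
  have "(\<lambda>s. \<pi> s $ i $ j) integrable_on {0..1}" for i j
  proof (rule integrable_eq)
    show "(\<lambda>s. ((axis i 1 + axis j 1) \<bullet> (\<pi> s *v (axis i 1 + axis j 1))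
        - axis i 1 \<bullet> (\<pi> s *v axis i 1) - axis j 1 \<bullet> (\<pi> s *v axis j 1)) / 2) integrable_on {0..1}"
      by (intro integrable_on_divide integrable_diff quadratic_form)
    show "((axis i 1 + axis j 1) \<bullet> (\<pi> s *v (axis i 1 + axis j 1))
        - axis i 1 \<bullet> (\<pi> s *v axis i 1) - axis j 1 \<bullet> (\<pi> s *v axis j 1)) / 2 = \<pi> s $ i $ j"
      if "s \<in> {0..1}" for s
      using sym_mat_entry_polarization[OF psd_imp_sym_mat[OF paths_psd[OF assms that]]] by simp
  qed
  then show "(\<lambda>s. \<pi> s \<bullet> b) integrable_on {0..1}" if "b \<in> Basis" for b
    using that by (auto simp: Basis_vec_def inner_axis)
qed

lemma integral_norm_linear_image_path_le:
  assumes "\<pi> \<in> paths" "linear G" and bound: "\<And>s. s \<in> {0..1} \<Longrightarrow> norm (G (\<pi> s)) \<le> B"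
  shows "(\<lambda>s. norm (G (\<pi> s))) integrable_on {0..1}"
    and "integral {0..1} (\<lambda>s. norm (G (\<pi> s))) \<le> B"
proof -
  have "continuous_on UNIV (\<lambda>X. norm (G X))"
    using assms(2) by (intro continuous_on_norm linear_continuous_on)
      (simp add: linear_conv_bounded_linear)
  then have "(\<lambda>s. norm (G (\<pi> s))) \<in> borel_measurable (lebesgue_on {0..1})"
    using integrable_imp_measurable[OF paths_integrable[OF assms(1)]]
    by (rule borel_measurable_continuous_on)
  then show int: "(\<lambda>s. norm (G (\<pi> s))) integrable_on {0..1}"
    by (rule measurable_bounded_by_integrable_imp_integrable_real[of _ _ "\<lambda>_. B"])
      (use bound in auto)
  show "integral {0..1} (\<lambda>s. norm (G (\<pi> s))) \<le> B"
    using integral_le[OF int integrable_const_ivl, of B] bound by auto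
qed

lemma paths_to_linear_retraction:
  fixes F :: "real^'n^'n \<Rightarrow> real^'n^'n"
  assumes \<pi>: "\<pi> \<in> paths_to y" and F: "linear F" "\<And>Y. psd Y \<Longrightarrow> psd (F Y)" "F y = x"
    and defect: "\<And>X v. psd X \<Longrightarrow> psd (y - X) \<Longrightarrow> \<bar>v \<bullet> ((X - F X) *v v)\<bar> \<le> M * (norm v)\<^sup>2"
  shows "\<exists>\<pi>'\<in>paths_to x. (\<lambda>s. norm (\<pi> s - \<pi>' s)) integrable_on {0..1}
    \<and> integral {0..1} (\<lambda>s. norm (\<pi> s - \<pi>' s)) \<le> 3 * M * (real CARD('n))\<^sup>2"
proof
  have "\<pi> \<in> paths" "\<pi> 1 = y" using \<pi> by (auto simp: paths_to_def)
  then show "(\<lambda>s. F (\<pi> s)) \<in> paths_to x"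
    using linear_image_in_paths[OF _ F(1,2)] F(3) by (simp add: paths_to_def)
  have "linear (\<lambda>X. X - F X)"
    using F(1) by (simp add: linear_compose_sub linear_id[unfolded id_def])
  moreover have "norm (\<pi> s - F (\<pi> s)) \<le> 3 * M * (real CARD('n))\<^sup>2" if "s \<in> {0..1}" for s
  proof (rule norm_le_of_quadratic_form_bound)
    have "psd (\<pi> s)" using paths_psd[OF \<open>\<pi> \<in> paths\<close> that] .
    then show "sym_mat (\<pi> s - F (\<pi> s))"
      using F(2) by (intro sym_mat_diff psd_imp_sym_mat)
    show "\<bar>v \<bullet> ((\<pi> s - F (\<pi> s)) *v v)\<bar> \<le> M * (norm v)\<^sup>2" for v
      using \<open>psd (\<pi> s)\<close> paths_psd_diff[OF \<open>\<pi> \<in> paths\<close>, of s 1] that \<open>\<pi> 1 = y\<close>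
      by (intro defect) auto
  qed
  ultimately show "(\<lambda>s. norm (\<pi> s - F (\<pi> s))) integrable_on {0..1}
    \<and> integral {0..1} (\<lambda>s. norm (\<pi> s - F (\<pi> s))) \<le> 3 * M * (real CARD('n))\<^sup>2"
    using integral_norm_linear_image_path_le[OF \<open>\<pi> \<in> paths\<close>] by blast
qed

lemma le_sqrt_add_mult:
  fixes a r :: real
  assumes "0 \<le> a" "0 \<le> r"
  shows "r \<le> sqrt ((a + r) * r)"
  using assms by (intro real_le_rsqrt) (simp add: power2_eq_square mult_right_mono)

lemma divide_add_le_sqrt_divide:
  fixes m r :: real
  assumes "0 < m" "0 \<le> r"
  shows "r / (m + r) \<le> sqrt r / sqrt m"
proof -
  have "r / (m + r) \<le> 1" "r / (m + r) \<le> r / m" "0 \<le> r / (m + r)"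
    using assms by (auto intro: divide_left_mono)
  then have "(r / (m + r))\<^sup>2 \<le> 1 * (r / m)"
    unfolding power2_eq_square by (intro mult_mono) auto
  then show ?thesis
    by (simp add: real_le_rsqrt real_sqrt_divide[symmetric])
qed

lemma Kfun_lower_bound:
  assumes "z \<noteq> 0" "0 < min_pos_eig z" "0 \<le> r"
  shows "sqrt r / sqrt (min_pos_eig z) * (norm z + r) + sqrt ((norm z + r) * r) \<le> Kfun z r"
proof -
  define A where "A = (norm z + r) * sqrt r / sqrt (min_pos_eig z)"
  have "A * 1 \<le> A * (1 + sqrt (norm z) / sqrt (min_pos_eig z))"
    using assms by (intro mult_left_mono) (auto simp: A_def)
  also have "\<dots> = (norm z + r) * (1 + sqrt (norm z) / sqrt (min_pos_eig z)) * sqrt r / sqrt (min_pos_eig z)"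
    by (simp add: A_def)
  finally show ?thesis
    using assms(1) by (simp add: Kfun_def frob_norm_eq_norm A_def mult.commute)
qed

(* The assumptions on P characterise the orthogonal projection onto the range of z. *)
locale range_retraction =
  fixes z w P :: "real^'n^'n"
  assumes psd_z: "psd z" and psd_w: "psd w" and z_nonzero: "z \<noteq> 0"
    and P_range: "\<And>v. P *v v \<in> range ((*v) z)"
    and P_kernel: "\<And>v. z *v (v - P *v v) = 0"
begin

definition weight :: real where
  "weight = min_pos_eig z / (min_pos_eig z + norm w)"

definition correction :: "real^'n^'n" where
  "correction = z - weight *\<^sub>R congruence P (z + w)"

definition retraction :: "real^'n^'n \<Rightarrow> real^'n^'n" where
  "retraction X = weight *\<^sub>R congruence P X + (trace X / trace (z + w)) *\<^sub>R correction"

lemma sym_z: "sym_mat z"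
  using psd_z by (rule psd_imp_sym_mat)

lemma min_pos_eig_pos: "0 < min_pos_eig z"
  using min_pos_eig_Rayleigh_bound(1)[OF psd_z z_nonzero] .

lemma P_Pythagoras: "(norm v)\<^sup>2 = (norm (P *v v))\<^sup>2 + (norm (v - P *v v))\<^sup>2"
proof -
  obtain u where "P *v v = z *v u" using P_range[of v] by blast
  then have "orthogonal (P *v v) (v - P *v v)"
    using sym_mat_inner_commute[OF sym_z, of u "v - P *v v"] P_kernel[of v]
    unfolding orthogonal_def by (metis inner_commute inner_zero_right)
  then show ?thesis
    using norm_add_Pythagorean[of "P *v v" "v - P *v v"] by simp
qed

lemma quadratic_form_z_P: "v \<bullet> (z *v v) = (P *v v) \<bullet> (z *v (P *v v))"
proof -
  have "z *v v = z *v (P *v v)"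
    using P_kernel[of v] by (simp add: matrix_vector_mult_diff_distrib)
  moreover have "(v - P *v v) \<bullet> (z *v (P *v v)) = 0"
    using sym_mat_inner_commute[OF sym_z, of "v - P *v v" "P *v v"] P_kernel[of v] by simp
  ultimately show ?thesis
    by (simp add: inner_diff_left)
qed

lemma weight_bounds:
  shows "0 \<le> weight" and "weight \<le> 1"
    and "(1 - weight) * min_pos_eig z = weight * norm w"
    and "1 - weight \<le> sqrt (norm w) / sqrt (min_pos_eig z)"
proof -
  have m: "0 < min_pos_eig z" by (rule min_pos_eig_pos)
  then have d: "0 < min_pos_eig z + norm w" by (simp add: add_pos_nonneg)
  with m show "0 \<le> weight" "weight \<le> 1" "(1 - weight) * min_pos_eig z = weight * norm w"
    by (simp_all add: weight_def field_simps)
  have "1 - weight = norm w / (min_pos_eig z + norm w)"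
    using d by (simp add: weight_def field_simps)
  then show "1 - weight \<le> sqrt (norm w) / sqrt (min_pos_eig z)"
    using divide_add_le_sqrt_divide[OF m norm_ge_zero] by simp
qed

lemma correction_quadratic_form:
  "v \<bullet> (correction *v v)
    = (1 - weight) * ((P *v v) \<bullet> (z *v (P *v v))) - weight * ((P *v v) \<bullet> (w *v (P *v v)))"
  by (simp add: correction_def matrix_vector_mult_diff_rdistrib matrix_vector_mult_add_rdistrib
      inner_diff_right inner_add_right congruence_quadratic_form quadratic_form_z_P[of v]
      algebra_simps flip: scaleR_matrix_vector_assoc)

lemma correction_quadratic_form_bounds:
  shows "0 \<le> v \<bullet> (correction *v v)"
    and "v \<bullet> (correction *v v)
      \<le> sqrt (norm w) / sqrt (min_pos_eig z) * ((norm z + norm w) * (norm v)\<^sup>2)"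
proof -
  define p where "p = P *v v"
  have norm_p: "(norm p)\<^sup>2 \<le> (norm v)\<^sup>2"
    using P_Pythagoras[of v] by (simp add: p_def)
  have "weight * (p \<bullet> (w *v p)) \<le> weight * (norm w * (norm p)\<^sup>2)"
    using abs_quadratic_form_le[of p w] weight_bounds(1) by (intro mult_left_mono) auto
  also have "\<dots> = (1 - weight) * (min_pos_eig z * (norm p)\<^sup>2)"
    using weight_bounds(3) by (metis mult.assoc)
  also have "\<dots> \<le> (1 - weight) * (p \<bullet> (z *v p))"
    using min_pos_eig_Rayleigh_bound(2)[OF psd_z z_nonzero] P_range weight_bounds(2)
    by (intro mult_left_mono) (auto simp: p_def)
  finally show "0 \<le> v \<bullet> (correction *v v)"
    by (simp add: correction_quadratic_form p_def)
  have "norm z * (norm p)\<^sup>2 \<le> (norm z + norm w) * (norm v)\<^sup>2"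
    using norm_p by (intro mult_mono) auto
  then have "p \<bullet> (z *v p) \<le> (norm z + norm w) * (norm v)\<^sup>2"
    using abs_quadratic_form_le[of p z] by linarith
  then have "(1 - weight) * (p \<bullet> (z *v p))
      \<le> sqrt (norm w) / sqrt (min_pos_eig z) * ((norm z + norm w) * (norm v)\<^sup>2)"
    using weight_bounds(2,4) psd_quadratic_form_nonneg[OF psd_z, of p] by (intro mult_mono) auto
  moreover have "0 \<le> weight * (p \<bullet> (w *v p))"
    using weight_bounds(1) psd_quadratic_form_nonneg[OF psd_w] by simp
  ultimately show "v \<bullet> (correction *v v)
      \<le> sqrt (norm w) / sqrt (min_pos_eig z) * ((norm z + norm w) * (norm v)\<^sup>2)"
    by (simp add: correction_quadratic_form p_def)
qed

lemma psd_correction: "psd correction"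
proof -
  have "sym_mat correction"
    unfolding correction_def using psd_z psd_w
    by (intro sym_mat_diff sym_mat_scaleR sym_mat_congruence sym_mat_add psd_imp_sym_mat)
  then show ?thesis
    using correction_quadratic_form_bounds(1) by (simp add: psd_def)
qed

lemma trace_z_w_pos: "0 < trace (z + w)"
  using trace_pos[OF psd_z z_nonzero] trace_nonneg[OF psd_w] by (simp add: trace_add)

lemma linear_retraction: "linear retraction"
  by (intro linearI)
    (simp_all add: retraction_def congruence_add congruence_scaleR trace_add trace_scaleR
      add_divide_distrib scaleR_add_left algebra_simps)

lemma psd_retraction:
  assumes "psd X"
  shows "psd (retraction X)"
proof -
  have "0 \<le> trace X / trace (z + w)"
    using trace_nonneg[OF assms] trace_z_w_pos by simp
  then show ?thesis
    unfolding retraction_def using assms weight_bounds(1) psd_correction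
    by (intro psd_add psd_scaleR psd_congruence) auto
qed

lemma retraction_endpoint: "retraction (z + w) = z"
  using trace_z_w_pos by (simp add: retraction_def correction_def)

lemma trace_ratio_bounds:
  assumes "psd X" "psd (z + w - X)"
  shows "0 \<le> trace X / trace (z + w)" and "trace X / trace (z + w) \<le> 1"
  using trace_nonneg[OF assms(1)] trace_nonneg[OF assms(2)] trace_z_w_pos
  by (simp_all add: trace_sub)

lemma between_split_quadratic_form_bounds:
  fixes v :: "real^'n"
  assumes X: "psd X" "psd (z + w - X)"
  defines "p \<equiv> P *v v" and "q \<equiv> v - P *v v"
  shows "0 \<le> p \<bullet> (X *v p)" "p \<bullet> (X *v p) \<le> (norm z + norm w) * (norm v)\<^sup>2"
    and "0 \<le> q \<bullet> (X *v q)" "q \<bullet> (X *v q) \<le> norm w * (norm v)\<^sup>2"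
    and "\<bar>p \<bullet> (X *v q)\<bar> \<le> sqrt ((norm z + norm w) * norm w) * (norm v)\<^sup>2"
proof -
  have norm_p: "(norm p)\<^sup>2 \<le> (norm v)\<^sup>2" and norm_q: "(norm q)\<^sup>2 \<le> (norm v)\<^sup>2"
    using P_Pythagoras[of v] by (simp_all add: p_def q_def)
  have "p \<bullet> ((z + w) *v p) \<le> norm (z + w) * (norm p)\<^sup>2"
    using abs_quadratic_form_le[of p "z + w"] by linarith
  also have "\<dots> \<le> (norm z + norm w) * (norm v)\<^sup>2"
    using norm_p by (intro mult_mono norm_triangle_ineq) auto
  finally have pYp: "p \<bullet> ((z + w) *v p) \<le> (norm z + norm w) * (norm v)\<^sup>2" .
  have "q \<bullet> ((z + w) *v q) = q \<bullet> (w *v q)"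
    using P_kernel[of v] by (simp add: q_def matrix_vector_mult_add_rdistrib inner_add_right)
  also have "\<dots> \<le> norm w * (norm v)\<^sup>2"
    using abs_quadratic_form_le[of q w] norm_q
    by (meson abs_ge_self mult_left_mono norm_ge_zero order_trans)
  finally have qYq: "q \<bullet> ((z + w) *v q) \<le> norm w * (norm v)\<^sup>2" .
  show "0 \<le> p \<bullet> (X *v p)" "p \<bullet> (X *v p) \<le> (norm z + norm w) * (norm v)\<^sup>2"
    and "0 \<le> q \<bullet> (X *v q)" "q \<bullet> (X *v q) \<le> norm w * (norm v)\<^sup>2"
    using psd_between_quadratic_form_bound(1,2)[OF X] pYp qYq by (auto intro: order_trans)
  have "\<bar>p \<bullet> (X *v q)\<bar> \<le> sqrt ((p \<bullet> ((z + w) *v p)) * (q \<bullet> ((z + w) *v q)))"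
    by (rule psd_between_cross_term_bound[OF X])
  also have "\<dots> \<le> sqrt (((norm z + norm w) * (norm v)\<^sup>2) * (norm w * (norm v)\<^sup>2))"
    using pYp qYq psd_between_quadratic_form_bound(1,2)[OF X, of p] psd_between_quadratic_form_bound(1,2)[OF X, of q]
    by (intro real_sqrt_le_mono mult_mono) auto
  also have "\<dots> = sqrt (((norm z + norm w) * norm w) * ((norm v)\<^sup>2)\<^sup>2)"
    by (simp only: power2_eq_square mult_ac)
  also have "\<dots> = sqrt ((norm z + norm w) * norm w) * (norm v)\<^sup>2"
    by (simp only: real_sqrt_mult real_sqrt_abs abs_power2)
  finally show "\<bar>p \<bullet> (X *v q)\<bar> \<le> sqrt ((norm z + norm w) * norm w) * (norm v)\<^sup>2" .
qed

lemma retraction_defect_bound: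
  assumes X: "psd X" "psd (z + w - X)"
  shows "\<bar>v \<bullet> ((X - retraction X) *v v)\<bar> \<le> 3 * Kfun z (norm w) * (norm v)\<^sup>2"
proof -
  define p q where "p = P *v v" and "q = v - P *v v"
  define \<theta> where "\<theta> = trace X / trace (z + w)"
  define \<rho> where "\<rho> = sqrt (norm w) / sqrt (min_pos_eig z)"
  define S where "S = sqrt ((norm z + norm w) * norm w)"
  define V where "V = (norm v)\<^sup>2"
  note split_bounds = between_split_quadratic_form_bounds[OF X, of v, folded p_def q_def S_def V_def]
  have "v \<bullet> (X *v v) = p \<bullet> (X *v p) + 2 * (p \<bullet> (X *v q)) + q \<bullet> (X *v q)"
    using sym_mat_quadratic_form_add[OF psd_imp_sym_mat[OF X(1)], of p 1 q] by (simp add: p_def q_def)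
  moreover have "v \<bullet> (retraction X *v v) = weight * (p \<bullet> (X *v p)) + \<theta> * (v \<bullet> (correction *v v))"
    by (simp add: retraction_def \<theta>_def p_def matrix_vector_mult_add_rdistrib inner_add_right
        congruence_quadratic_form flip: scaleR_matrix_vector_assoc)
  ultimately have expand: "v \<bullet> ((X - retraction X) *v v) = (1 - weight) * (p \<bullet> (X *v p))
      + 2 * (p \<bullet> (X *v q)) + q \<bullet> (X *v q) - \<theta> * (v \<bullet> (correction *v v))"
    by (simp add: matrix_vector_mult_diff_rdistrib inner_diff_right algebra_simps)
  note \<theta> = trace_ratio_bounds[OF X, folded \<theta>_def]
  have "(1 - weight) * (p \<bullet> (X *v p)) \<le> \<rho> * ((norm z + norm w) * V)"
    using weight_bounds(2,4) split_bounds(1,2) by (intro mult_mono) (auto simp: \<rho>_def)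
  moreover have "0 \<le> (1 - weight) * (p \<bullet> (X *v p))"
    using weight_bounds(2) split_bounds(1) by simp
  moreover have "0 \<le> \<theta> * (v \<bullet> (correction *v v))"
    using \<theta> correction_quadratic_form_bounds(1) by simp
  moreover have "\<theta> * (v \<bullet> (correction *v v)) \<le> \<rho> * ((norm z + norm w) * V)"
    using \<theta> correction_quadratic_form_bounds[of v] mult_left_le_one_le[of "v \<bullet> (correction *v v)" \<theta>]
    by (simp add: \<rho>_def V_def)
  moreover have "norm w * V \<le> S * V"
    unfolding S_def V_def by (intro mult_right_mono le_sqrt_add_mult) auto
  moreover have "\<rho> * ((norm z + norm w) * V) + S * V \<le> Kfun z (norm w) * V"
  proof -
    have "\<rho> * (norm z + norm w) + S \<le> Kfun z (norm w)"
      using Kfun_lower_bound[OF z_nonzero min_pos_eig_pos norm_ge_zero] by (simp add: \<rho>_def S_def)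
    then have "(\<rho> * (norm z + norm w) + S) * V \<le> Kfun z (norm w) * V"
      by (intro mult_right_mono) (auto simp: V_def)
    then show ?thesis by (simp add: algebra_simps)
  qed
  ultimately show ?thesis
    using split_bounds expand unfolding V_def by (simp add: abs_le_iff)
qed

lemma paths_to_retraction_estimate:
  assumes "\<pi> \<in> paths_to (z + w)"
  shows "\<exists>\<pi>'\<in>paths_to z. (\<lambda>s. norm (\<pi> s - \<pi>' s)) integrable_on {0..1}
    \<and> integral {0..1} (\<lambda>s. norm (\<pi> s - \<pi>' s)) \<le> 3 * (3 * Kfun z (norm w)) * (real CARD('n))\<^sup>2"
  using linear_retraction psd_retraction retraction_endpoint retraction_defect_bound
  by (intro paths_to_linear_retraction[OF assms])

end

lemma paths_to_zero_estimate:
  fixes w :: "real^'n^'n"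
  assumes "\<pi> \<in> paths_to w"
  shows "\<exists>\<pi>'\<in>paths_to 0. (\<lambda>s. norm (\<pi> s - \<pi>' s)) integrable_on {0..1}
    \<and> integral {0..1} (\<lambda>s. norm (\<pi> s - \<pi>' s)) \<le> 3 * (3 * Kfun 0 (norm w)) * (real CARD('n))\<^sup>2"
proof (rule paths_to_linear_retraction[OF assms, of "\<lambda>_. 0"])
  show "\<bar>v \<bullet> ((X - 0) *v v)\<bar> \<le> 3 * Kfun 0 (norm w) * (norm v)\<^sup>2"
    if "psd X" "psd (w - X)" for X and v :: "real^'n"
    using psd_between_quadratic_form_bound(3)[OF that, of v] by (simp add: Kfun_def)
qed (use psd_zero linear_zero in auto)

theorem lemma3p5:
  "\<exists>C::real. \<forall>(w::real^'n^'n) z \<pi>. psd w \<longrightarrow> psd z \<longrightarrow> \<pi> \<in> paths_to (z + w) \<longrightarrow>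
     (\<exists>\<pi>'\<in>paths_to z.
        (\<lambda>s. frob_norm (\<pi> s - \<pi>' s)) integrable_on {0..1} \<and>
        integral {0..1} (\<lambda>s. frob_norm (\<pi> s - \<pi>' s)) \<le> C * Kfun z (frob_norm w))"
proof (intro exI[of _ "9 * (real CARD('n))\<^sup>2"] allI impI)
  fix w z :: "real^'n^'n" and \<pi>
  assume w: "psd w" and z: "psd z" and \<pi>: "\<pi> \<in> paths_to (z + w)"
  have "\<exists>\<pi>'\<in>paths_to z. (\<lambda>s. norm (\<pi> s - \<pi>' s)) integrable_on {0..1}
      \<and> integral {0..1} (\<lambda>s. norm (\<pi> s - \<pi>' s)) \<le> 3 * (3 * Kfun z (norm w)) * (real CARD('n))\<^sup>2"
  proof (cases "z = 0")
    case True
    then show ?thesis using paths_to_zero_estimate \<pi> by simp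
  next
    case False
    obtain P where "\<And>v. P *v v \<in> range ((*v) z)" "\<And>v. z *v (v - P *v v) = 0"
      using range_projection_exists[OF psd_imp_sym_mat[OF z]] by metis
    then interpret range_retraction z w P
      using w z False by unfold_locales
    show ?thesis by (rule paths_to_retraction_estimate[OF \<pi>])
  qed
  then show "\<exists>\<pi>'\<in>paths_to z. (\<lambda>s. frob_norm (\<pi> s - \<pi>' s)) integrable_on {0..1}
      \<and> integral {0..1} (\<lambda>s. frob_norm (\<pi> s - \<pi>' s)) \<le> 9 * (real CARD('n))\<^sup>2 * Kfun z (frob_norm w)"
    by (simp add: frob_norm_eq_norm mult_ac)
qed

end
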